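(* Let $g:\mathbb{R}^N\to\mathbb{R}$ and a family of random functions $g(\theta,\xi)$ differentiable in $\theta$ be given. Given $\theta_1,v_0\in\mathbb{R}^N$, $\alpha$ and step sizes $\epsilon_n$, define for $n\ge1$: $v_n=\alpha v_{n-1}+\epsilon_n\nabla_\theta g(\theta_n,\xi_n)$, $\theta_{n+1}=\theta_n-v_n$. Assume: (i) the $\xi_n$ are mutually independent and independent of $\theta_1,v_0$, and $g(x)=\mathbb{E}_{\xi_n}(g(x,\xi_n))$ for all $x$ and $n$; (ii) $g$ is non-negative and continuously differentiable; $J=\{\theta:\nabla g(\theta)=0\}\ne\emptyset$; $\|\nabla g(x)-\nabla g(y)\|\le c\|x-y\|$ for some $c>0$ and all $x,y$; and there is $M>0$ with $\mathbb{E}_{\xi_n}\big(\|\nabla_\theta g(\theta)-\nabla_\theta g(\theta,\xi_n)\|^2\big)\le M(1+g(\theta))$ for all $\theta$ and $n$; (iii) $\alpha\in[0,1)$, and $\epsilon_n>0$ decreases monotonically to $0$ with $\sum\epsilon_n=\infty$, $\sum\epsilon_n^2<\infty$. Then for all $\theta_1\in\mathbb{R}^N$ and $v_0\in\mathbb{R}^N$ there is a scalar $T(\theta_1,v_0)$ such that $\mathbb{E}\big(g(\theta_n)\big)<T(\theta_1,v_0)$ for all $n\ge1$.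
   Context: $\|\cdot\|$ is the Euclidean norm; $\mathbb{E}_{\xi_n}$ denotes expectation with respect to $\xi_n$ only. *)

theory Defs
  imports "HOL-Probability.Probability"
begin

text \<open>Heavy-ball / momentum SGD iterates.  hb_state ... n omega = (theta_(n+1), v_n),
  so hb_state ... 0 omega = (theta_1, v_0) and for n >= 1:
  v_n = alpha v_(n-1) + eps_n * DG(theta_n, xi_n),  theta_(n+1) = theta_n - v_n.\<close>

fun hb_state :: "('n::finite) itself \<Rightarrow> (real^'n \<Rightarrow> 'b \<Rightarrow> real^'n) \<Rightarrow> real \<Rightarrow> (nat \<Rightarrow> real)
    \<Rightarrow> (nat \<Rightarrow> 'a \<Rightarrow> 'b) \<Rightarrow> real^'n \<Rightarrow> real^'n \<Rightarrow> nat \<Rightarrow> 'a \<Rightarrow> (real^'n) \<times> (real^'n)" where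
  "hb_state _ DG \<alpha> \<epsilon> \<xi> \<theta>1 v0 0 \<omega> = (\<theta>1, v0)"
| "hb_state t DG \<alpha> \<epsilon> \<xi> \<theta>1 v0 (Suc n) \<omega> =
     (let (\<theta>, v) = hb_state t DG \<alpha> \<epsilon> \<xi> \<theta>1 v0 n \<omega>;
          v' = \<alpha> *\<^sub>R v + \<epsilon> (Suc n) *\<^sub>R DG \<theta> (\<xi> (Suc n) \<omega>)
      in (\<theta> - v', v'))"

definition hb_theta :: "(real^'n::finite \<Rightarrow> 'b \<Rightarrow> real^'n) \<Rightarrow> real \<Rightarrow> (nat \<Rightarrow> real)
    \<Rightarrow> (nat \<Rightarrow> 'a \<Rightarrow> 'b) \<Rightarrow> real^'n \<Rightarrow> real^'n \<Rightarrow> nat \<Rightarrow> 'a \<Rightarrow> real^'n" where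
  "hb_theta DG \<alpha> \<epsilon> \<xi> \<theta>1 v0 n \<omega> = fst (hb_state TYPE('n) DG \<alpha> \<epsilon> \<xi> \<theta>1 v0 (n - 1) \<omega>)"

end

theory Submission
  imports Defs
begin

text \<open>With \<open>\<beta> = \<alpha> / (1 - \<alpha>)\<close>, the point \<open>z = \<theta> - \<beta> v\<close> performs plain stochastic gradient
  descent \<open>z' = z - (\<epsilon> / (1 - \<alpha>)) D\<close>, where \<open>D\<close> is the stochastic gradient taken at \<open>\<theta>\<close>.
  Hence \<open>L (\<theta>, v) = g (\<theta> - \<beta> v) + \<parallel>v\<parallel>\<^sup>2\<close> grows in conditional expectation at most by the
  factor \<open>1 + a \<epsilon>\<^sup>2\<close> plus \<open>b \<epsilon>\<^sup>2\<close> per step: the descent lemma for the \<open>c\<close>-Lipschitz gradient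
  controls the \<open>g\<close>-term, the first-order cross terms are absorbed by \<open>- \<epsilon> / (1 - \<alpha>) \<parallel>\<nabla>g \<theta>\<parallel>\<^sup>2\<close> and by
  the slack \<open>(1 - \<alpha>\<^sup>2) \<parallel>v\<parallel>\<^sup>2\<close>, and the second moment of \<open>D\<close> is bounded through the variance
  hypothesis and \<open>\<parallel>\<nabla>g x\<parallel>\<^sup>2 \<le> 4 c g x\<close>. Since \<open>\<Sigma> = \<Sum> \<epsilon>\<^sup>2 < \<infinity>\<close>, the expectations of \<open>L\<close>
  along the iteration stay below \<open>exp (a \<Sigma>) (L\<^sub>1 + b \<Sigma>)\<close>, and \<open>g \<theta> \<le> C L (\<theta>, v)\<close>.
  That \<open>D\<close> is unbiased, \<open>E \<nabla>G (\<theta>, \<xi>) = \<nabla>g \<theta>\<close>, follows from \<open>E G = g\<close> by differentiating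
  under the integral sign, justified by a uniform bound on the second moments of the difference quotients.\<close>

section \<open>Differentiation under the integral sign\<close>

lemma has_real_derivative_along_line:
  fixes f :: "'v::real_inner \<Rightarrow> real"
  assumes "GDERIV f (x + t *\<^sub>R e) :> D"
  shows "((\<lambda>t. f (x + t *\<^sub>R e)) has_real_derivative inner e D) (at t)"
proof -
  have "((\<lambda>t. x + t *\<^sub>R e) has_derivative (\<lambda>t. t *\<^sub>R e)) (at t)"
    by (auto intro!: derivative_eq_intros)
  from has_derivative_compose[OF this assms[unfolded gderiv_def]]
  show ?thesis
    by (simp add: has_field_derivative_def mult.commute[of _ "inner e D"] fun_eq_iff)
qed

lemma sq_diff_quotient_le_nn_integral:
  fixes f f' :: "real \<Rightarrow> real"
  assumes h: "0 < h"
    and deriv: "\<And>t. (f has_real_derivative f' t) (at t)"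
    and [measurable]: "f' \<in> borel_measurable borel"
  shows "ennreal (((f h - f 0) / h)\<^sup>2) \<le> ennreal (1 / h) * (\<integral>\<^sup>+t\<in>{0..h}. ennreal ((f' t)\<^sup>2) \<partial>lborel)"
proof (cases "(\<integral>\<^sup>+t\<in>{0..h}. ennreal ((f' t)\<^sup>2) \<partial>lborel) = \<infinity>")
  case True
  then show ?thesis using h by (simp add: ennreal_mult_top)
next
  case False
  then obtain r where r: "(\<integral>\<^sup>+t\<in>{0..h}. ennreal ((f' t)\<^sup>2) \<partial>lborel) = ennreal r" "0 \<le> r"
    by (cases "(\<integral>\<^sup>+t\<in>{0..h}. ennreal ((f' t)\<^sup>2) \<partial>lborel)" rule: ennreal_cases) auto
  have "((\<lambda>t. indicator {0..h} t * (f' t)\<^sup>2) has_integral r) UNIV"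
    using r by (intro nn_integral_has_integral) (auto simp: indicator_mult_ennreal mult.commute)
  moreover have "(\<lambda>t. indicator {0..h} t * (f' t)\<^sup>2) = (\<lambda>t. if t \<in> {0..h} then (f' t)\<^sup>2 else 0)"
    by (auto simp: fun_eq_iff)
  ultimately have sq: "((\<lambda>t. (f' t)\<^sup>2) has_integral r) {0..h}"
    using has_integral_restrict_UNIV[of "{0..h}" "\<lambda>t. (f' t)\<^sup>2" r] by simp
  have ftc: "(f' has_integral (f h - f 0)) {0..h}"
    using h deriv
    by (intro fundamental_theorem_of_calculus)
       (auto simp: has_real_derivative_iff_has_vector_derivative intro: has_vector_derivative_at_within)
  define m where "m = (f h - f 0) / h"
  have "((\<lambda>t. (f' t - m)\<^sup>2) has_integral (r - 2 * m * (f h - f 0) + m\<^sup>2 * h)) {0..h}"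
  proof -
    have "((\<lambda>t. (f' t)\<^sup>2 - 2 * m * f' t + m\<^sup>2) has_integral (r - 2 * m * (f h - f 0) + m\<^sup>2 * h)) {0..h}"
      using h by (intro has_integral_add has_integral_diff has_integral_mult_right sq ftc)
                 (use has_integral_const_real[of "m\<^sup>2" 0 h] in \<open>simp add: mult.commute\<close>)
    then show ?thesis by (simp add: power2_diff algebra_simps)
  qed
  then have "0 \<le> r - 2 * m * (f h - f 0) + m\<^sup>2 * h"
    by (rule has_integral_nonneg) simp
  moreover have "f h - f 0 = m * h" using h by (simp add: m_def)
  ultimately have "m\<^sup>2 \<le> r / h" using h by (simp add: field_simps power2_eq_square)
  then show ?thesis
    using h r by (simp add: m_def ennreal_mult'[symmetric] ennreal_leI divide_inverse mult.commute)
qed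

lemma (in sigma_finite_measure) nn_integral_sq_diff_quotient_le:
  fixes f f' :: "real \<Rightarrow> 'a \<Rightarrow> real"
  assumes h: "0 < h"
    and deriv: "\<And>t x. x \<in> space M \<Longrightarrow> ((\<lambda>t. f t x) has_real_derivative f' t x) (at t)"
    and [measurable]: "(\<lambda>(t, x). f' t x) \<in> borel_measurable (borel \<Otimes>\<^sub>M M)"
    and bound: "\<And>t. t \<in> {0..h} \<Longrightarrow> (\<integral>\<^sup>+x. ennreal ((f' t x)\<^sup>2) \<partial>M) \<le> B"
  shows "(\<integral>\<^sup>+x. ennreal (((f h x - f 0 x) / h)\<^sup>2) \<partial>M) \<le> B"
proof -
  interpret pair_sigma_finite lborel M ..
  have [measurable]: "(\<lambda>(t, x). f' t x) \<in> borel_measurable (lborel \<Otimes>\<^sub>M M)"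
    using measurable_cong_sets[OF sets_pair_measure_cong[OF sets_lborel refl] refl] by simp
  have "(\<integral>\<^sup>+x. ennreal (((f h x - f 0 x) / h)\<^sup>2) \<partial>M)
      \<le> (\<integral>\<^sup>+x. ennreal (1 / h) * (\<integral>\<^sup>+t\<in>{0..h}. ennreal ((f' t x)\<^sup>2) \<partial>lborel) \<partial>M)"
    using h deriv by (intro nn_integral_mono sq_diff_quotient_le_nn_integral) auto
  also have "\<dots> = ennreal (1 / h) * (\<integral>\<^sup>+t\<in>{0..h}. (\<integral>\<^sup>+x. ennreal ((f' t x)\<^sup>2) \<partial>M) \<partial>lborel)"
    by (simp add: nn_integral_cmult Fubini'[of "\<lambda>t x. ennreal ((f' t x)\<^sup>2) * indicator {0..h} t"]
        nn_integral_multc)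
  also have "\<dots> \<le> ennreal (1 / h) * (\<integral>\<^sup>+t\<in>{0..h}. B \<partial>lborel)"
    using bound by (intro mult_left_mono nn_integral_mono) (auto split: split_indicator)
  also have "\<dots> = B * (ennreal (1 / h) * ennreal h)"
    using h by (simp add: nn_integral_cmult_indicator mult_ac)
  also have "\<dots> = B"
    using h by (simp flip: ennreal_mult)
  finally show ?thesis .
qed

lemma nn_integral_norm_diff_sq_le:
  fixes f g :: "'a \<Rightarrow> 'b::real_normed_vector"
  assumes [measurable]: "f \<in> borel_measurable M" "g \<in> borel_measurable M"
  shows "(\<integral>\<^sup>+x. ennreal ((norm (f x - g x))\<^sup>2) \<partial>M)
    \<le> 2 * (\<integral>\<^sup>+x. ennreal ((norm (f x))\<^sup>2) \<partial>M) + 2 * (\<integral>\<^sup>+x. ennreal ((norm (g x))\<^sup>2) \<partial>M)"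
proof -
  have "ennreal ((norm (f x - g x))\<^sup>2) \<le> 2 * ennreal ((norm (f x))\<^sup>2) + 2 * ennreal ((norm (g x))\<^sup>2)" for x
  proof -
    have "(norm (f x - g x))\<^sup>2 \<le> (norm (f x) + norm (g x))\<^sup>2"
      by (simp add: power_mono norm_triangle_ineq4)
    also have "\<dots> \<le> 2 * (norm (f x))\<^sup>2 + 2 * (norm (g x))\<^sup>2"
      using sum_squares_bound[of "norm (f x)" "norm (g x)"] by (simp add: power2_sum)
    finally have "ennreal ((norm (f x - g x))\<^sup>2) \<le> ennreal (2 * (norm (f x))\<^sup>2 + 2 * (norm (g x))\<^sup>2)"
      by (rule ennreal_leI)
    then show ?thesis by (simp add: ennreal_plus ennreal_mult)
  qed
  then have "(\<integral>\<^sup>+x. ennreal ((norm (f x - g x))\<^sup>2) \<partial>M)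
      \<le> (\<integral>\<^sup>+x. 2 * ennreal ((norm (f x))\<^sup>2) + 2 * ennreal ((norm (g x))\<^sup>2) \<partial>M)"
    by (intro nn_integral_mono)
  also have "\<dots> = 2 * (\<integral>\<^sup>+x. ennreal ((norm (f x))\<^sup>2) \<partial>M) + 2 * (\<integral>\<^sup>+x. ennreal ((norm (g x))\<^sup>2) \<partial>M)"
    by (simp add: nn_integral_add nn_integral_cmult)
  finally show ?thesis .
qed

lemma (in finite_measure) square_nn_integral_finite_imp_integrable:
  fixes f :: "'a \<Rightarrow> real"
  assumes [measurable]: "f \<in> borel_measurable M"
    and finite: "(\<integral>\<^sup>+x. ennreal ((f x)\<^sup>2) \<partial>M) < \<infinity>"
  shows "integrable M (\<lambda>x. (f x)\<^sup>2)" and "integrable M f"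
proof -
  show sq: "integrable M (\<lambda>x. (f x)\<^sup>2)"
    using finite by (intro integrableI_nonneg) auto
  show "integrable M f"
    by (rule square_integrable_imp_integrable) (use sq in auto)
qed

lemma abs_le_min_plus_sq_div:
  fixes y m :: real
  assumes "0 < m"
  shows "\<bar>y\<bar> \<le> min \<bar>y\<bar> m + y\<^sup>2 / m"
proof (cases "\<bar>y\<bar> \<le> m")
  case False
  then have "\<bar>y\<bar> * 1 \<le> \<bar>y\<bar> * (\<bar>y\<bar> / m)" using assms by (intro mult_left_mono) auto
  then show ?thesis using False assms by (simp add: power2_eq_square)
qed (use assms in auto)

text \<open>Truncation at height \<open>m\<close> costs at most \<open>B / m\<close>, and the truncated sequence converges by
  dominated convergence.\<close>

lemma (in finite_measure) integral_abs_tendsto_zero_of_sq_bounded: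
  fixes r :: "nat \<Rightarrow> 'a \<Rightarrow> real"
  assumes [measurable]: "\<And>k. r k \<in> borel_measurable M"
    and lim: "\<And>x. x \<in> space M \<Longrightarrow> (\<lambda>k. r k x) \<longlonglongrightarrow> 0"
    and bound: "\<And>k. (\<integral>\<^sup>+x. ennreal ((r k x)\<^sup>2) \<partial>M) \<le> ennreal B"
  shows "(\<lambda>k. \<integral>x. \<bar>r k x\<bar> \<partial>M) \<longlonglongrightarrow> 0"
proof (rule order_tendstoI)
  fix a :: real assume "a < 0"
  then show "\<forall>\<^sub>F k in sequentially. a < (\<integral>x. \<bar>r k x\<bar> \<partial>M)"
    by (simp add: less_le_trans[OF _ integral_nonneg_AE])
next
  fix a :: real assume a: "0 < a"
  define B' where "B' = max B 0"
  have B': "0 \<le> B'" and bound': "(\<integral>\<^sup>+x. ennreal ((r k x)\<^sup>2) \<partial>M) \<le> ennreal B'" for k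
    using bound[of k] by (auto simp: B'_def max_def ennreal_neg)
  have sq_int: "integrable M (\<lambda>x. (r k x)\<^sup>2)" and int: "integrable M (r k)" for k
    using bound'[of k] by (intro square_nn_integral_finite_imp_integrable; auto intro: le_less_trans)+
  have sq_le: "(\<integral>x. (r k x)\<^sup>2 \<partial>M) \<le> B'" for k
    using bound'[of k] sq_int[of k] B' by (simp add: nn_integral_eq_integral)
  define m where "m = 2 * (B' + 1) / a"
  have m: "0 < m" "B' / m < a / 2" using a B' by (simp_all add: m_def field_simps)
  have "(\<lambda>k. \<integral>x. min \<bar>r k x\<bar> m \<partial>M) \<longlonglongrightarrow> (\<integral>x. 0 \<partial>M)"
  proof (rule integral_dominated_convergence[where w="\<lambda>_. m"])
    show "AE x in M. (\<lambda>k. min \<bar>r k x\<bar> m) \<longlonglongrightarrow> 0"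
    proof (rule AE_I2)
      fix x assume "x \<in> space M"
      then have "(\<lambda>k. min \<bar>r k x\<bar> m) \<longlonglongrightarrow> min \<bar>0\<bar> m" by (intro tendsto_intros lim)
      then show "(\<lambda>k. min \<bar>r k x\<bar> m) \<longlonglongrightarrow> 0" using m by simp
    qed
  qed (use m in auto)
  then have small: "\<forall>\<^sub>F k in sequentially. (\<integral>x. min \<bar>r k x\<bar> m \<partial>M) < a / 2"
    using order_tendstoD(2)[of _ 0 sequentially "a / 2"] a by simp
  have truncated: "(\<integral>x. \<bar>r k x\<bar> \<partial>M) \<le> (\<integral>x. min \<bar>r k x\<bar> m \<partial>M) + B' / m" for k
  proof -
    have "(\<integral>x. \<bar>r k x\<bar> \<partial>M) \<le> (\<integral>x. min \<bar>r k x\<bar> m + (r k x)\<^sup>2 / m \<partial>M)"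
      using m sq_int int by (intro integral_mono abs_le_min_plus_sq_div) auto
    also have "\<dots> = (\<integral>x. min \<bar>r k x\<bar> m \<partial>M) + (\<integral>x. (r k x)\<^sup>2 \<partial>M) / m"
      using sq_int int by simp
    also have "\<dots> \<le> (\<integral>x. min \<bar>r k x\<bar> m \<partial>M) + B' / m"
      using m sq_le[of k] by (simp add: divide_right_mono)
    finally show ?thesis .
  qed
  show "\<forall>\<^sub>F k in sequentially. (\<integral>x. \<bar>r k x\<bar> \<partial>M) < a"
    using small
  proof (rule eventually_mono)
    fix k assume "(\<integral>x. min \<bar>r k x\<bar> m \<partial>M) < a / 2"
    then show "(\<integral>x. \<bar>r k x\<bar> \<partial>M) < a" using truncated[of k] m(2) by linarith
  qed
qed

lemma (in finite_measure) integral_tendsto_of_sq_bounded: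
  fixes f :: "nat \<Rightarrow> 'a \<Rightarrow> real"
  assumes [measurable]: "\<And>k. f k \<in> borel_measurable M" "l \<in> borel_measurable M"
    and lim: "\<And>x. x \<in> space M \<Longrightarrow> (\<lambda>k. f k x) \<longlonglongrightarrow> l x"
    and bound: "\<And>k. (\<integral>\<^sup>+x. ennreal ((f k x)\<^sup>2) \<partial>M) \<le> ennreal B"
  shows "integrable M l" and "(\<lambda>k. \<integral>x. f k x \<partial>M) \<longlonglongrightarrow> (\<integral>x. l x \<partial>M)"
proof -
  have "(\<integral>\<^sup>+x. ennreal ((l x)\<^sup>2) \<partial>M) = (\<integral>\<^sup>+x. liminf (\<lambda>k. ennreal ((f k x)\<^sup>2)) \<partial>M)"
    using lim by (intro nn_integral_cong lim_imp_Liminf[symmetric]) (auto intro!: tendsto_intros)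
  also have "\<dots> \<le> liminf (\<lambda>k. \<integral>\<^sup>+x. ennreal ((f k x)\<^sup>2) \<partial>M)"
    by (intro nn_integral_liminf) simp
  also have "\<dots> \<le> ennreal B"
    using bound by (intro Liminf_le) auto
  finally have l_bound: "(\<integral>\<^sup>+x. ennreal ((l x)\<^sup>2) \<partial>M) \<le> ennreal B" .
  then show l_int: "integrable M l"
    by (intro square_nn_integral_finite_imp_integrable) (auto intro: le_less_trans)
  have f_int: "integrable M (f k)" for k
    using bound[of k] by (intro square_nn_integral_finite_imp_integrable) (auto intro: le_less_trans)
  have diff_bound: "(\<integral>\<^sup>+x. ennreal ((f k x - l x)\<^sup>2) \<partial>M) \<le> ennreal (4 * B)" for k
  proof -
    have "(\<integral>\<^sup>+x. ennreal ((f k x - l x)\<^sup>2) \<partial>M)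
        \<le> 2 * (\<integral>\<^sup>+x. ennreal ((f k x)\<^sup>2) \<partial>M) + 2 * (\<integral>\<^sup>+x. ennreal ((l x)\<^sup>2) \<partial>M)"
      using nn_integral_norm_diff_sq_le[of "f k" M l] by simp
    also have "\<dots> \<le> 2 * ennreal B + 2 * ennreal B"
      using bound l_bound by (intro add_mono mult_left_mono) auto
    also have "\<dots> \<le> ennreal (4 * B)"
      by (cases "0 \<le> B") (simp_all add: ennreal_neg ennreal_mult flip: distrib_right)
    finally show ?thesis .
  qed
  have abs_lim: "(\<lambda>k. \<integral>x. \<bar>f k x - l x\<bar> \<partial>M) \<longlonglongrightarrow> 0"
    using lim diff_bound by (intro integral_abs_tendsto_zero_of_sq_bounded) (auto intro: LIM_zero)
  have norm_le: "norm ((\<integral>x. f k x \<partial>M) - (\<integral>x. l x \<partial>M)) \<le> (\<integral>x. \<bar>f k x - l x\<bar> \<partial>M)" for k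
  proof -
    have "(\<integral>x. f k x \<partial>M) - (\<integral>x. l x \<partial>M) = (\<integral>x. f k x - l x \<partial>M)"
      using f_int l_int by (rule Bochner_Integration.integral_diff[symmetric])
    then show ?thesis
      using integral_norm_bound[of M "\<lambda>x. f k x - l x"] by (simp only: real_norm_def)
  qed
  have "(\<lambda>k. (\<integral>x. f k x \<partial>M) - (\<integral>x. l x \<partial>M)) \<longlonglongrightarrow> 0"
    by (rule Lim_null_comparison[OF always_eventually[OF allI[OF norm_le]] abs_lim])
  then show "(\<lambda>k. \<integral>x. f k x \<partial>M) \<longlonglongrightarrow> (\<integral>x. l x \<partial>M)"
    by (rule LIM_zero_cancel)
qed

lemma diff_quotient_tendsto:
  assumes "(f has_real_derivative D) (at 0)"
  shows "(\<lambda>k. (f (1 / Suc k) - f 0) / (1 / Suc k)) \<longlonglongrightarrow> D"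
proof -
  have "filterlim (\<lambda>k. 1 / real (Suc k)) (at 0) sequentially"
    by (intro filterlim_atI) (use LIMSEQ_inverse_real_of_nat in \<open>auto simp: inverse_eq_divide\<close>)
  from filterlim_compose[OF assms[unfolded DERIV_def] this] show ?thesis by simp
qed

lemma (in finite_measure) integral_inner_gradient:
  fixes G :: "'v::euclidean_space \<Rightarrow> 'a \<Rightarrow> real" and DG :: "'v \<Rightarrow> 'a \<Rightarrow> 'v"
  assumes [measurable]: "(\<lambda>(x, s). DG x s) \<in> borel_measurable (borel \<Otimes>\<^sub>M M)"
    and gradient: "\<And>x s. s \<in> space M \<Longrightarrow> GDERIV (\<lambda>y. G y s) x :> DG x s"
    and integrable: "\<And>x. integrable M (G x)"
    and deriv: "((\<lambda>t. \<integral>s. G (\<theta> + t *\<^sub>R e) s \<partial>M) has_real_derivative D) (at 0)"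
    and bound: "\<And>t. t \<in> {0..1} \<Longrightarrow> (\<integral>\<^sup>+s. ennreal ((norm (DG (\<theta> + t *\<^sub>R e) s))\<^sup>2) \<partial>M) \<le> ennreal W"
  shows "integrable M (\<lambda>s. inner e (DG \<theta> s))" and "(\<integral>s. inner e (DG \<theta> s) \<partial>M) = D"
proof -
  define q where "q k s = (G (\<theta> + (1 / Suc k) *\<^sub>R e) s - G (\<theta> + 0 *\<^sub>R e) s) / (1 / Suc k)" for k s
  have G_meas[measurable]: "G x \<in> borel_measurable M" for x
    using integrable by auto
  have inner_bound: "(\<integral>\<^sup>+s. ennreal ((inner e (DG (\<theta> + t *\<^sub>R e) s))\<^sup>2) \<partial>M) \<le> ennreal ((norm e)\<^sup>2 * W)"
    if "t \<in> {0..1}" for t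
  proof -
    have "(\<integral>\<^sup>+s. ennreal ((inner e (DG (\<theta> + t *\<^sub>R e) s))\<^sup>2) \<partial>M)
        \<le> (\<integral>\<^sup>+s. ennreal ((norm e)\<^sup>2) * ennreal ((norm (DG (\<theta> + t *\<^sub>R e) s))\<^sup>2) \<partial>M)"
    proof (intro nn_integral_mono)
      fix s
      have "\<bar>inner e (DG (\<theta> + t *\<^sub>R e) s)\<bar>\<^sup>2 \<le> (norm e * norm (DG (\<theta> + t *\<^sub>R e) s))\<^sup>2"
        by (intro power_mono Cauchy_Schwarz_ineq2) simp
      then show "ennreal ((inner e (DG (\<theta> + t *\<^sub>R e) s))\<^sup>2)
          \<le> ennreal ((norm e)\<^sup>2) * ennreal ((norm (DG (\<theta> + t *\<^sub>R e) s))\<^sup>2)"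
        by (simp add: ennreal_leI power_mult_distrib flip: ennreal_mult)
    qed
    also have "\<dots> \<le> ennreal ((norm e)\<^sup>2) * ennreal W"
      using bound[OF that] by (simp add: nn_integral_cmult mult_left_mono)
    also have "\<dots> \<le> ennreal ((norm e)\<^sup>2 * W)"
      by (simp add: ennreal_mult')
    finally show ?thesis .
  qed
  have q_bound: "(\<integral>\<^sup>+s. ennreal ((q k s)\<^sup>2) \<partial>M) \<le> ennreal ((norm e)\<^sup>2 * W)" for k
    unfolding q_def
  proof (rule nn_integral_sq_diff_quotient_le)
    show "((\<lambda>t. G (\<theta> + t *\<^sub>R e) s) has_real_derivative inner e (DG (\<theta> + t *\<^sub>R e) s)) (at t)"
      if "s \<in> space M" for t s
      using that by (intro has_real_derivative_along_line gradient)
    show "(\<integral>\<^sup>+s. ennreal ((inner e (DG (\<theta> + t *\<^sub>R e) s))\<^sup>2) \<partial>M) \<le> ennreal ((norm e)\<^sup>2 * W)"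
      if "t \<in> {0..1 / Suc k}" for t
    proof -
      have "t \<le> 1" using that order_trans[of t "1 / real (Suc k)" 1] by simp
      then show ?thesis using that by (intro inner_bound) auto
    qed
  qed simp_all
  have q_lim: "(\<lambda>k. q k s) \<longlonglongrightarrow> inner e (DG \<theta> s)" if "s \<in> space M" for s
    unfolding q_def using has_real_derivative_along_line[where x=\<theta> and t=0 and e=e, OF gradient[OF that]]
    by (intro diff_quotient_tendsto) simp
  have "(\<lambda>k. \<integral>s. q k s \<partial>M)
      = (\<lambda>k. ((\<integral>s. G (\<theta> + (1 / Suc k) *\<^sub>R e) s \<partial>M) - (\<integral>s. G (\<theta> + 0 *\<^sub>R e) s \<partial>M)) / (1 / Suc k))"
    unfolding q_def using integrable by simp
  with diff_quotient_tendsto[OF deriv] have lim_D: "(\<lambda>k. \<integral>s. q k s \<partial>M) \<longlonglongrightarrow> D"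
    by (simp only:)
  have q_meas: "q k \<in> borel_measurable M" for k
    unfolding q_def by measurable
  have "(\<lambda>s. inner e (DG \<theta> s)) \<in> borel_measurable M"
    by measurable
  note limit = integral_tendsto_of_sq_bounded[OF q_meas this q_lim q_bound]
  show "integrable M (\<lambda>s. inner e (DG \<theta> s))"
    by (rule limit(1))
  show "(\<integral>s. inner e (DG \<theta> s) \<partial>M) = D"
    by (rule LIMSEQ_unique[OF limit(2) lim_D])
qed

section \<open>Linear recurrences and independent random variables\<close>

lemma ennreal_recurrence_le_exp:
  fixes u :: "nat \<Rightarrow> ennreal" and e :: "nat \<Rightarrow> real"
  assumes a: "0 \<le> a" and b: "0 \<le> b" and e: "\<And>n. 0 \<le> e n"
    and step: "\<And>n. u (Suc n) \<le> ennreal (1 + a * e n) * u n + ennreal (b * e n)"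
  shows "u n \<le> ennreal (exp (a * (\<Sum>k<n. e k))) * (u 0 + ennreal (b * (\<Sum>k<n. e k)))"
proof (induction n)
  case 0
  then show ?case by simp
next
  case (Suc n)
  define S where "S = (\<Sum>k<n. e k)"
  have S: "0 \<le> S" using e by (simp add: S_def sum_nonneg)
  have growth: "ennreal (1 + a * e n) * ennreal (exp (a * S)) \<le> ennreal (exp (a * (S + e n)))"
  proof -
    have "(1 + a * e n) * exp (a * S) \<le> exp (a * e n) * exp (a * S)"
      using exp_ge_add_one_self[of "a * e n"] by (intro mult_right_mono) auto
    then have "ennreal ((1 + a * e n) * exp (a * S)) \<le> ennreal (exp (a * (S + e n)))"
      by (intro ennreal_leI) (simp add: distrib_left exp_add mult.commute)
    then show ?thesis
      using a e[of n] by (simp add: ennreal_mult')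
  qed
  have "ennreal 1 \<le> ennreal (exp (a * (S + e n)))"
    using a e[of n] S by (intro ennreal_leI) simp
  then have offset: "ennreal (b * e n) \<le> ennreal (exp (a * (S + e n))) * ennreal (b * e n)"
    using mult_right_mono[of "ennreal 1" _ "ennreal (b * e n)"] by simp
  have "u (Suc n) \<le> ennreal (1 + a * e n) * (ennreal (exp (a * S)) * (u 0 + ennreal (b * S))) + ennreal (b * e n)"
    using step[of n] Suc.IH unfolding S_def by (elim order_trans) (intro add_right_mono mult_left_mono; simp)
  also have "\<dots> \<le> ennreal (exp (a * (S + e n))) * (u 0 + ennreal (b * S)) + ennreal (exp (a * (S + e n))) * ennreal (b * e n)"
    using growth offset by (intro add_mono) (auto simp: mult.assoc[symmetric] intro: mult_right_mono)
  also have "\<dots> = ennreal (exp (a * (S + e n))) * (u 0 + ennreal (b * (S + e n)))"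
    using b e[of n] S by (simp add: distrib_left ennreal_plus add.assoc)
  finally show ?case by (simp add: S_def add.commute)
qed

lemma (in prob_space) nn_integral_indep_var:
  assumes indep: "indep_var A X B Y" and [measurable]: "f \<in> borel_measurable (A \<Otimes>\<^sub>M B)"
  shows "(\<integral>\<^sup>+\<omega>. f (X \<omega>, Y \<omega>) \<partial>M) = (\<integral>\<^sup>+\<omega>. (\<integral>\<^sup>+\<omega>'. f (X \<omega>, Y \<omega>') \<partial>M) \<partial>M)"
proof -
  have [measurable]: "X \<in> measurable M A" "Y \<in> measurable M B"
    using indep by (auto simp: indep_var_distribution_eq)
  interpret X: prob_space "distr M A X" by (rule prob_space_distr) simp
  interpret Y: prob_space "distr M B Y" by (rule prob_space_distr) simp
  interpret XY: pair_prob_space "distr M A X" "distr M B Y" ..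
  have "(\<integral>\<^sup>+\<omega>. f (X \<omega>, Y \<omega>) \<partial>M) = (\<integral>\<^sup>+p. f p \<partial>distr M (A \<Otimes>\<^sub>M B) (\<lambda>\<omega>. (X \<omega>, Y \<omega>)))"
    by (simp add: nn_integral_distr)
  also have "\<dots> = (\<integral>\<^sup>+p. f p \<partial>(distr M A X \<Otimes>\<^sub>M distr M B Y))"
    using indep by (simp add: indep_var_distribution_eq)
  also have "\<dots> = (\<integral>\<^sup>+x. (\<integral>\<^sup>+y. f (x, y) \<partial>distr M B Y) \<partial>distr M A X)"
    by (rule Y.nn_integral_fst[symmetric]) simp
  also have "\<dots> = (\<integral>\<^sup>+\<omega>. (\<integral>\<^sup>+y. f (X \<omega>, y) \<partial>distr M B Y) \<partial>M)"
    by (simp add: nn_integral_distr Y.borel_measurable_nn_integral)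
  also have "\<dots> = (\<integral>\<^sup>+\<omega>. (\<integral>\<^sup>+\<omega>'. f (X \<omega>, Y \<omega>') \<partial>M) \<partial>M)"
    by (intro nn_integral_cong nn_integral_distr measurable_compose[OF measurable_Pair1' \<open>f \<in> _\<close>])
       (auto simp: measurable_space)
  finally show ?thesis .
qed

section \<open>Functions with Lipschitz gradient\<close>

locale nonneg_lipschitz_gradient =
  fixes g :: "'v::real_inner \<Rightarrow> real" and Dg :: "'v \<Rightarrow> 'v" and c :: real
  assumes nonneg: "\<And>x. 0 \<le> g x"
    and gradient: "\<And>x. GDERIV g x :> Dg x"
    and lipschitz: "\<And>x y. norm (Dg x - Dg y) \<le> c * norm (x - y)"
    and c_pos: "0 < c"
begin

lemma continuous_on_g: "continuous_on UNIV g"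
  using gradient unfolding gderiv_def
  by (meson continuous_at_imp_continuous_on has_derivative_continuous)

lemma borel_measurable_g[measurable]: "g \<in> borel_measurable borel"
  by (rule borel_measurable_continuous_onI[OF continuous_on_g])

lemma continuous_on_Dg: "continuous_on UNIV Dg"
  by (rule lipschitz_on_continuous_on[where L=c])
     (use c_pos lipschitz in \<open>auto intro!: lipschitz_onI simp: dist_norm\<close>)

lemma descent: "g y \<le> g x + inner (Dg x) (y - x) + c * (norm (y - x))\<^sup>2"
proof -
  define e where "e = y - x"
  obtain z where z: "0 < z" "z < 1"
    and mvt: "g (x + 1 *\<^sub>R e) - g (x + 0 *\<^sub>R e) = (1 - 0) * inner e (Dg (x + z *\<^sub>R e))"
    using MVT2[of 0 1 "\<lambda>t. g (x + t *\<^sub>R e)" "\<lambda>t. inner e (Dg (x + t *\<^sub>R e))"]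
      has_real_derivative_along_line[OF gradient] by auto
  have "inner e (Dg (x + z *\<^sub>R e)) - inner e (Dg x) = inner e (Dg (x + z *\<^sub>R e) - Dg x)"
    by (simp add: inner_diff_right)
  also have "\<dots> \<le> norm e * norm (Dg (x + z *\<^sub>R e) - Dg x)"
    by (rule norm_cauchy_schwarz)
  also have "\<dots> \<le> norm e * (c * norm (z *\<^sub>R e))"
    using lipschitz[of "x + z *\<^sub>R e" x] by (intro mult_left_mono) auto
  also have "\<dots> \<le> norm e * (c * norm e)"
    using z c_pos by (intro mult_left_mono) (auto intro!: mult_left_le_one_le)
  finally have "inner e (Dg (x + z *\<^sub>R e)) \<le> inner e (Dg x) + c * (norm e)\<^sup>2"
    by (simp add: power2_eq_square algebra_simps)
  with mvt show ?thesis by (simp add: e_def inner_commute)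
qed

text \<open>Descent from \<open>x\<close> with step \<open>1 / (2 c)\<close> stays above \<open>0\<close>.\<close>

lemma norm_gradient_sq_le: "(norm (Dg x))\<^sup>2 \<le> 4 * c * g x"
proof -
  have "0 \<le> g (x - (1 / (2 * c)) *\<^sub>R Dg x)" by (rule nonneg)
  also have "\<dots> \<le> g x - (norm (Dg x))\<^sup>2 / (4 * c)"
    using descent[of "x - (1 / (2 * c)) *\<^sub>R Dg x" x] c_pos
    by (simp add: power2_eq_square field_simps power_mult_distrib flip: power2_norm_eq_inner)
  finally show ?thesis using c_pos by (simp add: field_simps)
qed

lemma shift_le: "g (x + w) \<le> (1 + 2 * c) * g x + (1 / 2 + c) * (norm w)\<^sup>2"
proof -
  have "g (x + w) \<le> g x + inner (Dg x) w + c * (norm w)\<^sup>2"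
    using descent[of "x + w" x] by simp
  also have "inner (Dg x) w \<le> ((norm (Dg x))\<^sup>2 + (norm w)\<^sup>2) / 2"
    using norm_cauchy_schwarz[of "Dg x" w] sum_squares_bound[of "norm (Dg x)" "norm w"] by simp
  also have "\<dots> \<le> 2 * c * g x + (norm w)\<^sup>2 / 2"
    using norm_gradient_sq_le[of x] by simp
  finally show ?thesis by (simp add: algebra_simps)
qed

end

section \<open>The Lyapunov function of the heavy-ball method\<close>

definition hb_step :: "real \<Rightarrow> real \<Rightarrow> 'v::real_vector \<times> 'v \<Rightarrow> 'v \<Rightarrow> 'v \<times> 'v" where
  "hb_step \<alpha> \<epsilon> x d = (fst x - (\<alpha> *\<^sub>R snd x + \<epsilon> *\<^sub>R d), \<alpha> *\<^sub>R snd x + \<epsilon> *\<^sub>R d)"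

locale heavy_ball_lyapunov = nonneg_lipschitz_gradient g Dg c
  for g :: "'v::euclidean_space \<Rightarrow> real" and Dg c +
  fixes \<alpha> K :: real
  assumes alpha: "0 \<le> \<alpha>" "\<alpha> < 1"
    and K_nonneg: "0 \<le> K"
begin

definition "\<beta> = \<alpha> / (1 - \<alpha>)"

definition lyapunov :: "'v \<times> 'v \<Rightarrow> real" where
  "lyapunov x = g (fst x - \<beta> *\<^sub>R snd x) + (norm (snd x))\<^sup>2"

definition "cross_coeff = c\<^sup>2 * \<beta>\<^sup>2 / (2 * (1 - \<alpha>)) + 2 * (1 - \<alpha>) * \<alpha>\<^sup>2"
definition "g_coeff = (1 + 2 * c) + (1 / 2 + c) * \<beta>\<^sup>2"
definition "noise_coeff = c / (1 - \<alpha>)\<^sup>2 + 1"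
definition "rate = cross_coeff\<^sup>2 / (1 - \<alpha>\<^sup>2) + noise_coeff * (8 * c + 2 * K) * g_coeff"
definition "offset = 2 * K * noise_coeff"

lemma beta_nonneg: "0 \<le> \<beta>"
  using alpha by (simp add: \<beta>_def)

lemma one_minus_alpha_sq_pos: "0 < 1 - \<alpha>\<^sup>2"
  using alpha power_strict_mono[of \<alpha> 1 2] by simp

lemma borel_measurable_lyapunov[measurable]: "lyapunov \<in> borel_measurable borel"
  unfolding lyapunov_def borel_prod[symmetric] by measurable

lemma lyapunov_nonneg: "0 \<le> lyapunov x"
  using nonneg by (simp add: lyapunov_def add_nonneg_nonneg)

lemma rate_nonneg: "0 \<le> rate" and offset_nonneg: "0 \<le> offset"
  using c_pos K_nonneg one_minus_alpha_sq_pos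
  by (simp_all add: rate_def offset_def noise_coeff_def g_coeff_def add_nonneg_nonneg)

lemma g_coeff_nonneg: "0 \<le> g_coeff"
  using c_pos by (simp add: g_coeff_def)

lemma g_le_lyapunov: "g \<theta> \<le> g_coeff * lyapunov (\<theta>, v)"
proof -
  have "g \<theta> = g ((\<theta> - \<beta> *\<^sub>R v) + \<beta> *\<^sub>R v)" by simp
  also have "\<dots> \<le> (1 + 2 * c) * g (\<theta> - \<beta> *\<^sub>R v) + ((1 / 2 + c) * \<beta>\<^sup>2) * (norm v)\<^sup>2"
    using shift_le[of "\<theta> - \<beta> *\<^sub>R v" "\<beta> *\<^sub>R v"] beta_nonneg by (simp add: power_mult_distrib)
  also have "\<dots> \<le> g_coeff * g (\<theta> - \<beta> *\<^sub>R v) + g_coeff * (norm v)\<^sup>2"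
    using c_pos beta_nonneg nonneg[of "\<theta> - \<beta> *\<^sub>R v"]
    by (intro add_mono mult_right_mono) (auto simp: g_coeff_def)
  finally show ?thesis by (simp add: lyapunov_def algebra_simps)
qed

lemma lyapunov_hb_step_le:
  "lyapunov (hb_step \<alpha> \<epsilon> (\<theta>, v) d)
    \<le> g (\<theta> - \<beta> *\<^sub>R v) + \<alpha>\<^sup>2 * (norm v)\<^sup>2
      + inner ((2 * \<alpha> * \<epsilon>) *\<^sub>R v - (\<epsilon> / (1 - \<alpha>)) *\<^sub>R Dg (\<theta> - \<beta> *\<^sub>R v)) d
      + noise_coeff * \<epsilon>\<^sup>2 * (norm d)\<^sup>2"
proof -
  define v' where "v' = \<alpha> *\<^sub>R v + \<epsilon> *\<^sub>R d"
  define \<eta> where "\<eta> = \<epsilon> / (1 - \<alpha>)"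
  have "v' + \<beta> *\<^sub>R v' = ((1 + \<beta>) * \<alpha>) *\<^sub>R v + ((1 + \<beta>) * \<epsilon>) *\<^sub>R d"
    by (simp add: v'_def scaleR_add_right scaleR_add_left distrib_right)
  also have "\<dots> = \<beta> *\<^sub>R v + \<eta> *\<^sub>R d"
    using alpha by (simp add: \<beta>_def \<eta>_def field_simps)
  finally have shifted: "\<theta> - v' - \<beta> *\<^sub>R v' = (\<theta> - \<beta> *\<^sub>R v) - \<eta> *\<^sub>R d"
    by (simp add: algebra_simps)
  have L: "lyapunov (hb_step \<alpha> \<epsilon> (\<theta>, v) d) = g ((\<theta> - \<beta> *\<^sub>R v) - \<eta> *\<^sub>R d) + (norm v')\<^sup>2"
    by (simp (no_asm) add: hb_step_def lyapunov_def shifted flip: v'_def)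
  have descent_step: "g ((\<theta> - \<beta> *\<^sub>R v) - \<eta> *\<^sub>R d)
      \<le> g (\<theta> - \<beta> *\<^sub>R v) - \<eta> * inner (Dg (\<theta> - \<beta> *\<^sub>R v)) d + c * \<eta>\<^sup>2 * (norm d)\<^sup>2"
    using descent[of "(\<theta> - \<beta> *\<^sub>R v) - \<eta> *\<^sub>R d" "\<theta> - \<beta> *\<^sub>R v"] by (simp add: power_mult_distrib)
  have "(norm v')\<^sup>2 = inner v' v'"
    by (rule power2_norm_eq_inner)
  also have "\<dots> = \<alpha>\<^sup>2 * inner v v + 2 * \<alpha> * \<epsilon> * inner v d + \<epsilon>\<^sup>2 * inner d d"
    by (simp add: v'_def inner_commute[of d v] power2_eq_square algebra_simps)
  finally have v': "(norm v')\<^sup>2 = \<alpha>\<^sup>2 * (norm v)\<^sup>2 + 2 * \<alpha> * \<epsilon> * inner v d + \<epsilon>\<^sup>2 * (norm d)\<^sup>2"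
    by (simp add: power2_norm_eq_inner)
  have noise: "c * \<eta>\<^sup>2 * (norm d)\<^sup>2 + \<epsilon>\<^sup>2 * (norm d)\<^sup>2 = noise_coeff * \<epsilon>\<^sup>2 * (norm d)\<^sup>2"
    using alpha by (simp add: \<eta>_def noise_coeff_def field_simps)
  have "inner ((2 * \<alpha> * \<epsilon>) *\<^sub>R v - \<eta> *\<^sub>R Dg (\<theta> - \<beta> *\<^sub>R v)) d
      = 2 * \<alpha> * \<epsilon> * inner v d - \<eta> * inner (Dg (\<theta> - \<beta> *\<^sub>R v)) d"
    by (simp add: inner_diff_left)
  then show ?thesis
    using L descent_step v' noise unfolding \<eta>_def by linarith
qed

lemma cross_term_le:
  assumes "0 \<le> \<epsilon>"
  shows "inner ((2 * \<alpha> * \<epsilon>) *\<^sub>R v - (\<epsilon> / (1 - \<alpha>)) *\<^sub>R Dg (\<theta> - \<beta> *\<^sub>R v)) (Dg \<theta>)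
    \<le> \<epsilon> * cross_coeff * (norm v)\<^sup>2"
proof -
  define \<eta> where "\<eta> = \<epsilon> / (1 - \<alpha>)"
  define N where "N = norm (Dg \<theta>)"
  have \<eta>: "0 \<le> \<eta>" using assms alpha by (simp add: \<eta>_def)
  have \<epsilon>: "\<epsilon> = \<eta> * (1 - \<alpha>)" using alpha by (simp add: \<eta>_def)
  have "norm (Dg (\<theta> - \<beta> *\<^sub>R v) - Dg \<theta>) * N \<le> (c * \<beta> * norm v) * N"
    using lipschitz[of "\<theta> - \<beta> *\<^sub>R v" \<theta>] beta_nonneg by (intro mult_right_mono) (auto simp: N_def)
  moreover have "- (norm (Dg (\<theta> - \<beta> *\<^sub>R v) - Dg \<theta>) * N) \<le> inner (Dg (\<theta> - \<beta> *\<^sub>R v) - Dg \<theta>) (Dg \<theta>)"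
    using Cauchy_Schwarz_ineq2[of "Dg (\<theta> - \<beta> *\<^sub>R v) - Dg \<theta>" "Dg \<theta>"] by (simp add: N_def)
  moreover have "inner (Dg \<theta>) (Dg \<theta>) = N\<^sup>2"
    by (simp add: N_def power2_norm_eq_inner)
  ultimately have "N\<^sup>2 - (c * \<beta> * norm v) * N \<le> inner (Dg (\<theta> - \<beta> *\<^sub>R v)) (Dg \<theta>)"
    by (simp add: inner_diff_left)
  then have "\<eta> * (N\<^sup>2 - (c * \<beta> * norm v) * N) \<le> \<eta> * inner (Dg (\<theta> - \<beta> *\<^sub>R v)) (Dg \<theta>)"
    using \<eta> by (rule mult_left_mono)
  moreover have "2 * \<alpha> * \<epsilon> * inner v (Dg \<theta>) \<le> 2 * \<alpha> * \<epsilon> * (norm v * N)"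
    using norm_cauchy_schwarz[of v "Dg \<theta>"] alpha assms by (intro mult_left_mono) (auto simp: N_def)
  ultimately have "inner ((2 * \<alpha> * \<epsilon>) *\<^sub>R v - \<eta> *\<^sub>R Dg (\<theta> - \<beta> *\<^sub>R v)) (Dg \<theta>)
      \<le> 2 * \<alpha> * \<epsilon> * (norm v * N) - \<eta> * (N\<^sup>2 - (c * \<beta> * norm v) * N)"
    by (simp add: inner_diff_left)
  also have "\<dots> = \<eta> * (2 * N * (2 * (1 - \<alpha>) * \<alpha> * norm v)) / 2 + \<eta> * (2 * N * (c * \<beta> * norm v)) / 2 - \<eta> * N\<^sup>2"
    by (simp add: \<epsilon> field_simps power2_eq_square)
  also have "\<dots> \<le> \<eta> * (N\<^sup>2 + (2 * (1 - \<alpha>) * \<alpha> * norm v)\<^sup>2) / 2 + \<eta> * (N\<^sup>2 + (c * \<beta> * norm v)\<^sup>2) / 2 - \<eta> * N\<^sup>2"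
    using \<eta> by (intro diff_right_mono add_mono divide_right_mono mult_left_mono sum_squares_bound) auto
  also have "\<dots> = \<epsilon> * cross_coeff * (norm v)\<^sup>2"
    using alpha by (simp add: \<epsilon> cross_coeff_def power2_eq_square field_simps)
  finally show ?thesis by (simp add: \<eta>_def)
qed

lemma mean_lyapunov_step_le:
  assumes \<epsilon>: "0 \<le> \<epsilon>" and m: "m \<le> 2 * (norm (Dg \<theta>))\<^sup>2 + 2 * K * (1 + g \<theta>)"
  shows "g (\<theta> - \<beta> *\<^sub>R v) + \<alpha>\<^sup>2 * (norm v)\<^sup>2
      + inner ((2 * \<alpha> * \<epsilon>) *\<^sub>R v - (\<epsilon> / (1 - \<alpha>)) *\<^sub>R Dg (\<theta> - \<beta> *\<^sub>R v)) (Dg \<theta>)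
      + noise_coeff * \<epsilon>\<^sup>2 * m
    \<le> (1 + rate * \<epsilon>\<^sup>2) * lyapunov (\<theta>, v) + offset * \<epsilon>\<^sup>2"
proof -
  define L where "L = lyapunov (\<theta>, v)"
  define V where "V = (norm v)\<^sup>2"
  define q where "q = cross_coeff\<^sup>2 / (1 - \<alpha>\<^sup>2)"
  have L: "L = g (\<theta> - \<beta> *\<^sub>R v) + V" and V: "0 \<le> V" "V \<le> L"
    using nonneg[of "\<theta> - \<beta> *\<^sub>R v"] by (simp_all add: L_def V_def lyapunov_def)
  have "\<epsilon> * cross_coeff \<le> (1 - \<alpha>\<^sup>2) + q * \<epsilon>\<^sup>2"
  proof -
    have "(\<epsilon> * cross_coeff) * (1 - \<alpha>\<^sup>2) \<le> (\<epsilon> * cross_coeff)\<^sup>2 + (1 - \<alpha>\<^sup>2)\<^sup>2"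
      using sum_squares_bound[of "\<epsilon> * cross_coeff" "1 - \<alpha>\<^sup>2"]
        zero_le_power2[of "\<epsilon> * cross_coeff"] zero_le_power2[of "1 - \<alpha>\<^sup>2"] by linarith
    then show ?thesis
      using one_minus_alpha_sq_pos by (simp add: q_def field_simps power2_eq_square)
  qed
  then have "(\<alpha>\<^sup>2 + \<epsilon> * cross_coeff) * V \<le> V + q * \<epsilon>\<^sup>2 * L"
    using V one_minus_alpha_sq_pos mult_right_mono[of "\<alpha>\<^sup>2 + \<epsilon> * cross_coeff" "1 + q * \<epsilon>\<^sup>2" V]
      mult_left_mono[of V L "q * \<epsilon>\<^sup>2"]
    by (simp add: q_def algebra_simps)
  moreover have "noise_coeff * \<epsilon>\<^sup>2 * m \<le> noise_coeff * \<epsilon>\<^sup>2 * ((8 * c + 2 * K) * g_coeff * L + 2 * K)"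
  proof (intro mult_left_mono)
    have "(8 * c + 2 * K) * g \<theta> \<le> (8 * c + 2 * K) * (g_coeff * L)"
      using g_le_lyapunov[of \<theta> v] c_pos K_nonneg by (intro mult_left_mono) (auto simp: L_def)
    then show "m \<le> (8 * c + 2 * K) * g_coeff * L + 2 * K"
      using m norm_gradient_sq_le[of \<theta>] by (simp add: algebra_simps)
  qed (use alpha c_pos in \<open>auto simp: noise_coeff_def\<close>)
  moreover note cross_term_le[OF \<epsilon>, of v \<theta>]
  ultimately show ?thesis
    by (simp add: L_def[symmetric] V_def[symmetric] L rate_def offset_def q_def algebra_simps)
qed

end

section \<open>Stochastic gradients\<close>

locale stochastic_gradient = nonneg_lipschitz_gradient g Dg c
  for g :: "'v::euclidean_space \<Rightarrow> real" and Dg c +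
  fixes \<mu> :: "'s measure" and G :: "'v \<Rightarrow> 's \<Rightarrow> real" and DG :: "'v \<Rightarrow> 's \<Rightarrow> 'v" and K :: real
  assumes prob_space_\<mu>: "prob_space \<mu>"
    and DG_measurable[measurable]: "(\<lambda>(x, s). DG x s) \<in> borel_measurable (borel \<Otimes>\<^sub>M \<mu>)"
    and G_gradient: "\<And>x s. s \<in> space \<mu> \<Longrightarrow> GDERIV (\<lambda>y. G y s) x :> DG x s"
    and G_integrable: "\<And>x. integrable \<mu> (G x)"
    and unbiased: "\<And>x. g x = (\<integral>s. G x s \<partial>\<mu>)"
    and variance: "\<And>x. (\<integral>\<^sup>+s. ennreal ((norm (Dg x - DG x s))\<^sup>2) \<partial>\<mu>) \<le> ennreal (K * (1 + g x))"
    and K_nonneg: "0 \<le> K"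
begin

sublocale prob_space \<mu> by (rule prob_space_\<mu>)

lemma DG_second_moment:
  "(\<integral>\<^sup>+s. ennreal ((norm (DG x s))\<^sup>2) \<partial>\<mu>) \<le> ennreal (2 * (norm (Dg x))\<^sup>2 + 2 * K * (1 + g x))"
proof -
  have "(\<integral>\<^sup>+s. ennreal ((norm (DG x s))\<^sup>2) \<partial>\<mu>) = (\<integral>\<^sup>+s. ennreal ((norm (Dg x - (Dg x - DG x s)))\<^sup>2) \<partial>\<mu>)"
    by simp
  also have "\<dots> \<le> 2 * ennreal ((norm (Dg x))\<^sup>2) + 2 * (\<integral>\<^sup>+s. ennreal ((norm (Dg x - DG x s))\<^sup>2) \<partial>\<mu>)"
    using nn_integral_norm_diff_sq_le[of "\<lambda>_. Dg x" \<mu> "\<lambda>s. Dg x - DG x s"] by (simp add: emeasure_space_1)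
  also have "\<dots> \<le> 2 * ennreal ((norm (Dg x))\<^sup>2) + 2 * ennreal (K * (1 + g x))"
    using variance[of x] by (intro add_left_mono mult_left_mono) auto
  also have "\<dots> = ennreal (2 * (norm (Dg x))\<^sup>2 + 2 * K * (1 + g x))"
    using K_nonneg nonneg[of x] by (simp add: ennreal_mult ennreal_plus mult.assoc)
  finally show ?thesis .
qed

lemma integrable_norm_DG_sq: "integrable \<mu> (\<lambda>s. (norm (DG x s))\<^sup>2)"
  using DG_second_moment[of x]
  by (intro square_nn_integral_finite_imp_integrable(1)) (auto intro: le_less_trans)

lemma
  shows integrable_inner_DG: "integrable \<mu> (\<lambda>s. inner e (DG x s))"
    and integral_inner_DG: "(\<integral>s. inner e (DG x s) \<partial>\<mu>) = inner e (Dg x)"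
proof -
  define b where "b t = 2 * (norm (Dg (x + t *\<^sub>R e)))\<^sup>2 + 2 * K * (1 + g (x + t *\<^sub>R e))" for t
  have "continuous_on {0..1} b"
    unfolding b_def by (intro continuous_intros continuous_on_compose2[OF continuous_on_g]
        continuous_on_compose2[OF continuous_on_Dg]) auto
  then obtain t0 where t0_max: "\<And>t. t \<in> {0..1} \<Longrightarrow> b t \<le> b t0"
    using continuous_attains_sup[of "{0..1}" b] by fastforce
  have deriv: "((\<lambda>t. \<integral>s. G (x + t *\<^sub>R e) s \<partial>\<mu>) has_real_derivative inner e (Dg x)) (at 0)"
    using has_real_derivative_along_line[where x=x and t=0 and e=e, OF gradient]
    by (simp flip: unbiased)
  have "(\<integral>\<^sup>+s. ennreal ((norm (DG (x + t *\<^sub>R e) s))\<^sup>2) \<partial>\<mu>) \<le> ennreal (b t0)" if "t \<in> {0..1}" for t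
    using DG_second_moment ennreal_leI[OF t0_max[OF that]] unfolding b_def by (rule order_trans)
  from integral_inner_gradient[OF DG_measurable G_gradient G_integrable deriv this]
  show "integrable \<mu> (\<lambda>s. inner e (DG x s))" "(\<integral>s. inner e (DG x s) \<partial>\<mu>) = inner e (Dg x)"
    by auto
qed

end

lemma (in heavy_ball_lyapunov) expected_lyapunov_hb_step:
  assumes "stochastic_gradient g Dg c \<mu> G DG K" and \<epsilon>: "0 \<le> \<epsilon>"
  shows "(\<integral>\<^sup>+s. ennreal (lyapunov (hb_step \<alpha> \<epsilon> x (DG (fst x) s))) \<partial>\<mu>)
    \<le> ennreal ((1 + rate * \<epsilon>\<^sup>2) * lyapunov x + offset * \<epsilon>\<^sup>2)"
proof -
  interpret stochastic_gradient g Dg c \<mu> G DG K by fact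
  obtain \<theta> v where x: "x = (\<theta>, v)" by (cases x)
  define w where "w = (2 * \<alpha> * \<epsilon>) *\<^sub>R v - (\<epsilon> / (1 - \<alpha>)) *\<^sub>R Dg (\<theta> - \<beta> *\<^sub>R v)"
  define R where "R s = g (\<theta> - \<beta> *\<^sub>R v) + \<alpha>\<^sup>2 * (norm v)\<^sup>2 + inner w (DG \<theta> s)
    + noise_coeff * \<epsilon>\<^sup>2 * (norm (DG \<theta> s))\<^sup>2" for s
  have step_le_R: "lyapunov (hb_step \<alpha> \<epsilon> x (DG (fst x) s)) \<le> R s" for s
    using lyapunov_hb_step_le by (simp add: x R_def w_def)
  have R_nonneg: "0 \<le> R s" for s
    using step_le_R[of s] lyapunov_nonneg[of "hb_step \<alpha> \<epsilon> x (DG (fst x) s)"] by linarith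
  have R_int: "integrable \<mu> R"
    unfolding R_def using integrable_inner_DG integrable_norm_DG_sq by simp
  have second_moment: "(\<integral>s. (norm (DG \<theta> s))\<^sup>2 \<partial>\<mu>) \<le> 2 * (norm (Dg \<theta>))\<^sup>2 + 2 * K * (1 + g \<theta>)"
    using DG_second_moment[of \<theta>] integrable_norm_DG_sq[of \<theta>] K_nonneg nonneg[of \<theta>]
    by (simp add: nn_integral_eq_integral del: ennreal_plus)
  have "(\<integral>\<^sup>+s. ennreal (lyapunov (hb_step \<alpha> \<epsilon> x (DG (fst x) s))) \<partial>\<mu>) \<le> (\<integral>\<^sup>+s. ennreal (R s) \<partial>\<mu>)"
    by (intro nn_integral_mono ennreal_leI step_le_R)
  also have "\<dots> = ennreal (\<integral>s. R s \<partial>\<mu>)"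
    using R_int R_nonneg by (intro nn_integral_eq_integral) auto
  also have "(\<integral>s. R s \<partial>\<mu>) = g (\<theta> - \<beta> *\<^sub>R v) + \<alpha>\<^sup>2 * (norm v)\<^sup>2 + inner w (Dg \<theta>)
      + noise_coeff * \<epsilon>\<^sup>2 * (\<integral>s. (norm (DG \<theta> s))\<^sup>2 \<partial>\<mu>)"
    unfolding R_def using integrable_inner_DG integrable_norm_DG_sq integral_inner_DG prob_space by simp
  also have "\<dots> \<le> (1 + rate * \<epsilon>\<^sup>2) * lyapunov x + offset * \<epsilon>\<^sup>2"
    unfolding w_def x using mean_lyapunov_step_le[OF \<epsilon> second_moment] .
  finally show ?thesis by (simp add: ennreal_leI)
qed

section \<open>The heavy-ball iteration\<close>

lemma hb_state_Suc:
  "hb_state TYPE('n::finite) DG \<alpha> \<epsilon> \<xi> \<theta>1 v0 (Suc n) \<omega>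
    = hb_step \<alpha> (\<epsilon> (Suc n)) (hb_state TYPE('n) DG \<alpha> \<epsilon> \<xi> \<theta>1 v0 n \<omega>)
        (DG (fst (hb_state TYPE('n) DG \<alpha> \<epsilon> \<xi> \<theta>1 v0 n \<omega>)) (\<xi> (Suc n) \<omega>))"
  by (simp add: hb_step_def split_def Let_def)

text \<open>This exhibits the state after \<open>n\<close> steps as a measurable function of \<open>\<xi> 1, \<dots>, \<xi> n\<close>
  alone, which makes it independent of \<open>\<xi> (n + 1)\<close>.\<close>

lemma hb_state_eq_coordinates:
  assumes "{1..n} \<subseteq> I"
  shows "hb_state TYPE('n::finite) DG \<alpha> \<epsilon> \<xi> \<theta>1 v0 n \<omega>
    = hb_state TYPE('n) DG \<alpha> \<epsilon> (\<lambda>i f. f i) \<theta>1 v0 n (restrict (\<lambda>i. \<xi> i \<omega>) I)"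
  using assms
proof (induction n)
  case (Suc n)
  then have "{1..n} \<subseteq> I" "Suc n \<in> I" by auto
  with Suc.IH show ?case by (simp only: hb_state_Suc) (simp add: restrict_def)
qed simp

lemma measurable_hb_step[measurable]:
  fixes DG :: "'v::euclidean_space \<Rightarrow> 's \<Rightarrow> 'v"
  assumes [measurable]: "(\<lambda>(x, s). DG x s) \<in> borel_measurable (borel \<Otimes>\<^sub>M S)"
  shows "(\<lambda>(x, s). hb_step \<alpha> \<epsilon> x (DG (fst x) s)) \<in> borel_measurable (borel \<Otimes>\<^sub>M S)"
  unfolding hb_step_def borel_prod[symmetric] by measurable

lemma measurable_hb_state_coordinates:
  fixes DG :: "real^'n::finite \<Rightarrow> 's \<Rightarrow> real^'n"
  assumes [measurable]: "(\<lambda>(x, s). DG x s) \<in> borel_measurable (borel \<Otimes>\<^sub>M S)" and "{1..n} \<subseteq> I"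
  shows "hb_state TYPE('n) DG \<alpha> \<epsilon> (\<lambda>i f. f i) \<theta>1 v0 n \<in> borel_measurable (PiM I (\<lambda>_. S))"
  using assms(2)
proof (induction n)
  case 0
  have "hb_state TYPE('n) DG \<alpha> \<epsilon> (\<lambda>i f. f i) \<theta>1 v0 0 = (\<lambda>_. (\<theta>1, v0))"
    by (rule ext) simp
  then show ?case by simp
next
  case (Suc n)
  then have "{1..n} \<subseteq> I" and [measurable]: "Suc n \<in> I" by auto
  with Suc.IH have [measurable]: "hb_state TYPE('n) DG \<alpha> \<epsilon> (\<lambda>i f. f i) \<theta>1 v0 n \<in> borel_measurable (PiM I (\<lambda>_. S))"
    by blast
  then have "(\<lambda>f. (hb_state TYPE('n) DG \<alpha> \<epsilon> (\<lambda>i f. f i) \<theta>1 v0 n f, f (Suc n)))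
      \<in> measurable (PiM I (\<lambda>_. S)) (borel \<Otimes>\<^sub>M S)"
    by measurable
  from measurable_compose[OF this measurable_hb_step[of DG S \<alpha> "\<epsilon> (Suc n)"]]
  show ?case by (simp only: hb_state_Suc) simp
qed

lemma measurable_hb_state:
  fixes DG :: "real^'n::finite \<Rightarrow> 's \<Rightarrow> real^'n"
  assumes "(\<lambda>(x, s). DG x s) \<in> borel_measurable (borel \<Otimes>\<^sub>M S)"
    and "\<And>i. i \<in> {1..n} \<Longrightarrow> \<xi> i \<in> measurable M S"
  shows "hb_state TYPE('n) DG \<alpha> \<epsilon> \<xi> \<theta>1 v0 n \<in> borel_measurable M"
proof -
  have "(\<lambda>\<omega>. hb_state TYPE('n) DG \<alpha> \<epsilon> (\<lambda>i f. f i) \<theta>1 v0 n (restrict (\<lambda>i. \<xi> i \<omega>) {1..n}))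
      \<in> borel_measurable M"
    using assms by (intro measurable_compose[OF measurable_restrict measurable_hb_state_coordinates]) auto
  then show ?thesis
    by (simp only: hb_state_eq_coordinates[OF order_refl, symmetric])
qed

lemma (in prob_space) nn_integral_hb_state_Suc:
  fixes DG :: "real^'n::finite \<Rightarrow> 's \<Rightarrow> real^'n" and f :: "(real^'n) \<times> (real^'n) \<Rightarrow> ennreal"
  assumes indep: "indep_vars (\<lambda>_. S) \<xi> {1..}"
    and DG_meas[measurable]: "(\<lambda>(x, s). DG x s) \<in> borel_measurable (borel \<Otimes>\<^sub>M S)"
    and [measurable]: "f \<in> borel_measurable borel"
  shows "(\<integral>\<^sup>+\<omega>. f (hb_state TYPE('n) DG \<alpha> \<epsilon> \<xi> \<theta>1 v0 (Suc n) \<omega>) \<partial>M)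
    = (\<integral>\<^sup>+\<omega>. (\<integral>\<^sup>+s. f (hb_step \<alpha> (\<epsilon> (Suc n)) (hb_state TYPE('n) DG \<alpha> \<epsilon> \<xi> \<theta>1 v0 n \<omega>)
          (DG (fst (hb_state TYPE('n) DG \<alpha> \<epsilon> \<xi> \<theta>1 v0 n \<omega>)) s)) \<partial>distr M S (\<xi> (Suc n))) \<partial>M)"
proof -
  define \<Phi> where "\<Phi> = hb_state TYPE('n) DG \<alpha> \<epsilon> (\<lambda>i f. f i) \<theta>1 v0 n"
  define F where "F p = f (hb_step \<alpha> (\<epsilon> (Suc n)) (\<Phi> (fst p)) (DG (fst (\<Phi> (fst p))) (snd p (Suc n))))" for p
  have [measurable]: "\<Phi> \<in> borel_measurable (PiM {1..n} (\<lambda>_. S))"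
    unfolding \<Phi>_def by (rule measurable_hb_state_coordinates[OF DG_meas order_refl])
  have [measurable]: "\<xi> (Suc n) \<in> measurable M S"
    using indep by (simp add: indep_vars_def)
  have "F \<in> borel_measurable (PiM {1..n} (\<lambda>_. S) \<Otimes>\<^sub>M PiM {Suc n} (\<lambda>_. S))"
    unfolding F_def[abs_def] by measurable
  from nn_integral_indep_var[OF indep_var_restrict[OF indep, of "{1..n}" "{Suc n}"] this]
  have "(\<integral>\<^sup>+\<omega>. F (restrict (\<lambda>i. \<xi> i \<omega>) {1..n}, restrict (\<lambda>i. \<xi> i \<omega>) {Suc n}) \<partial>M)
      = (\<integral>\<^sup>+\<omega>. (\<integral>\<^sup>+\<omega>'. F (restrict (\<lambda>i. \<xi> i \<omega>) {1..n}, restrict (\<lambda>i. \<xi> i \<omega>') {Suc n}) \<partial>M) \<partial>M)"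
    by auto
  moreover have "\<Phi> (restrict (\<lambda>i. \<xi> i \<omega>) {1..n}) = hb_state TYPE('n) DG \<alpha> \<epsilon> \<xi> \<theta>1 v0 n \<omega>" for \<omega>
    unfolding \<Phi>_def by (rule hb_state_eq_coordinates[symmetric]) simp
  moreover have "restrict (\<lambda>i. \<xi> i \<omega>) {Suc n} (Suc n) = \<xi> (Suc n) \<omega>" for \<omega>
    by simp
  ultimately have "(\<integral>\<^sup>+\<omega>. f (hb_state TYPE('n) DG \<alpha> \<epsilon> \<xi> \<theta>1 v0 (Suc n) \<omega>) \<partial>M)
      = (\<integral>\<^sup>+\<omega>. (\<integral>\<^sup>+\<omega>'. f (hb_step \<alpha> (\<epsilon> (Suc n)) (hb_state TYPE('n) DG \<alpha> \<epsilon> \<xi> \<theta>1 v0 n \<omega>)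
          (DG (fst (hb_state TYPE('n) DG \<alpha> \<epsilon> \<xi> \<theta>1 v0 n \<omega>)) (\<xi> (Suc n) \<omega>'))) \<partial>M) \<partial>M)"
    by (simp only: F_def fst_conv snd_conv hb_state_Suc)
  also have "\<dots> = (\<integral>\<^sup>+\<omega>. (\<integral>\<^sup>+s. f (hb_step \<alpha> (\<epsilon> (Suc n)) (hb_state TYPE('n) DG \<alpha> \<epsilon> \<xi> \<theta>1 v0 n \<omega>)
          (DG (fst (hb_state TYPE('n) DG \<alpha> \<epsilon> \<xi> \<theta>1 v0 n \<omega>)) s)) \<partial>distr M S (\<xi> (Suc n))) \<partial>M)"
    by (intro nn_integral_cong nn_integral_distr[symmetric]) measurable
  finally show ?thesis .
qed

locale heavy_ball_sgd = heavy_ball_lyapunov g Dg c \<alpha> K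
  for g :: "real^'n::finite \<Rightarrow> real" and Dg c \<alpha> K +
  fixes P :: "'a measure" and S :: "'b measure" and \<xi> :: "nat \<Rightarrow> 'a \<Rightarrow> 'b"
    and G :: "real^'n \<Rightarrow> 'b \<Rightarrow> real" and DG :: "real^'n \<Rightarrow> 'b \<Rightarrow> real^'n" and \<epsilon> :: "nat \<Rightarrow> real"
  assumes prob_space_P: "prob_space P"
    and xi_indep: "prob_space.indep_vars P (\<lambda>_. S) \<xi> {1..}"
    and DG_measurable[measurable]: "(\<lambda>(x, s). DG x s) \<in> borel_measurable (borel \<Otimes>\<^sub>M S)"
    and G_measurable[measurable]: "\<And>x. G x \<in> borel_measurable S"
    and G_gradient: "\<And>x s. s \<in> space S \<Longrightarrow> GDERIV (\<lambda>y. G y s) x :> DG x s"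
    and G_integrable: "\<And>x n. 1 \<le> n \<Longrightarrow> integrable P (\<lambda>\<omega>. G x (\<xi> n \<omega>))"
    and unbiased: "\<And>x n. 1 \<le> n \<Longrightarrow> g x = (\<integral>\<omega>. G x (\<xi> n \<omega>) \<partial>P)"
    and variance: "\<And>x n. 1 \<le> n \<Longrightarrow>
      (\<integral>\<^sup>+\<omega>. ennreal ((norm (Dg x - DG x (\<xi> n \<omega>)))\<^sup>2) \<partial>P) \<le> ennreal (K * (1 + g x))"
    and eps_nonneg: "\<And>n. 1 \<le> n \<Longrightarrow> 0 \<le> \<epsilon> n"
    and eps_sq_summable: "summable (\<lambda>n. (\<epsilon> n)\<^sup>2)"
begin

sublocale prob_space P by (rule prob_space_P)

lemma measurable_xi[measurable]: "1 \<le> n \<Longrightarrow> \<xi> n \<in> measurable P S"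
  using xi_indep by (simp add: indep_vars_def)

lemma borel_measurable_hb_state[measurable]:
  "hb_state TYPE('n) DG \<alpha> \<epsilon> \<xi> \<theta>1 v0 n \<in> borel_measurable P"
  by (rule measurable_hb_state[OF DG_measurable measurable_xi]) simp

lemma stochastic_gradient_distr_xi:
  assumes n: "1 \<le> n"
  shows "stochastic_gradient g Dg c (distr P S (\<xi> n)) G DG K"
proof (intro stochastic_gradient.intro nonneg_lipschitz_gradient_axioms stochastic_gradient_axioms.intro)
  show "prob_space (distr P S (\<xi> n))"
    using n by (intro prob_space_distr) simp
  show "(\<lambda>(x, s). DG x s) \<in> borel_measurable (borel \<Otimes>\<^sub>M distr P S (\<xi> n))"
    using measurable_cong_sets[OF sets_pair_measure_cong[OF refl sets_distr] refl] by simp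
  show "integrable (distr P S (\<xi> n)) (G x)" for x
    using n G_integrable[OF n] by (subst integrable_distr_eq) auto
  show "g x = (\<integral>s. G x s \<partial>distr P S (\<xi> n))" for x
    using n unbiased[OF n] by (subst integral_distr) auto
  show "(\<integral>\<^sup>+s. ennreal ((norm (Dg x - DG x s))\<^sup>2) \<partial>distr P S (\<xi> n)) \<le> ennreal (K * (1 + g x))" for x
    using n variance[OF n] by (subst nn_integral_distr) auto
qed (use G_gradient K_nonneg in auto)

lemma expected_lyapunov_Suc:
  "(\<integral>\<^sup>+\<omega>. lyapunov (hb_state TYPE('n) DG \<alpha> \<epsilon> \<xi> \<theta>1 v0 (Suc n) \<omega>) \<partial>P)
    \<le> ennreal (1 + rate * (\<epsilon> (Suc n))\<^sup>2) * (\<integral>\<^sup>+\<omega>. lyapunov (hb_state TYPE('n) DG \<alpha> \<epsilon> \<xi> \<theta>1 v0 n \<omega>) \<partial>P)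
      + ennreal (offset * (\<epsilon> (Suc n))\<^sup>2)"
proof -
  have "(\<integral>\<^sup>+\<omega>. lyapunov (hb_state TYPE('n) DG \<alpha> \<epsilon> \<xi> \<theta>1 v0 (Suc n) \<omega>) \<partial>P)
      = (\<integral>\<^sup>+\<omega>. (\<integral>\<^sup>+s. lyapunov (hb_step \<alpha> (\<epsilon> (Suc n)) (hb_state TYPE('n) DG \<alpha> \<epsilon> \<xi> \<theta>1 v0 n \<omega>)
          (DG (fst (hb_state TYPE('n) DG \<alpha> \<epsilon> \<xi> \<theta>1 v0 n \<omega>)) s)) \<partial>distr P S (\<xi> (Suc n))) \<partial>P)"
    by (rule nn_integral_hb_state_Suc[OF xi_indep DG_measurable]) simp
  also have "\<dots> \<le> (\<integral>\<^sup>+\<omega>. ennreal ((1 + rate * (\<epsilon> (Suc n))\<^sup>2) * lyapunov (hb_state TYPE('n) DG \<alpha> \<epsilon> \<xi> \<theta>1 v0 n \<omega>)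
      + offset * (\<epsilon> (Suc n))\<^sup>2) \<partial>P)"
    using stochastic_gradient_distr_xi eps_nonneg by (intro nn_integral_mono expected_lyapunov_hb_step) auto
  also have "\<dots> = ennreal (1 + rate * (\<epsilon> (Suc n))\<^sup>2) * (\<integral>\<^sup>+\<omega>. lyapunov (hb_state TYPE('n) DG \<alpha> \<epsilon> \<xi> \<theta>1 v0 n \<omega>) \<partial>P)
      + ennreal (offset * (\<epsilon> (Suc n))\<^sup>2)"
    using rate_nonneg offset_nonneg lyapunov_nonneg
    by (simp add: nn_integral_add nn_integral_cmult ennreal_mult ennreal_plus emeasure_space_1)
  finally show ?thesis .
qed

theorem expected_g_bounded:
  "\<exists>T. \<forall>n\<ge>1. (\<integral>\<^sup>+\<omega>. ennreal (g (hb_theta DG \<alpha> \<epsilon> \<xi> \<theta>1 v0 n \<omega>)) \<partial>P) < ennreal T"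
proof -
  define u where "u n = (\<integral>\<^sup>+\<omega>. lyapunov (hb_state TYPE('n) DG \<alpha> \<epsilon> \<xi> \<theta>1 v0 n \<omega>) \<partial>P)" for n
  define \<Sigma> where "\<Sigma> = (\<Sum>k. (\<epsilon> (Suc k))\<^sup>2)"
  define B where "B = exp (rate * \<Sigma>) * (lyapunov (\<theta>1, v0) + offset * \<Sigma>)"
  have "summable (\<lambda>k. (\<epsilon> (Suc k))\<^sup>2)"
    using summable_Suc_iff[of "\<lambda>k. (\<epsilon> k)\<^sup>2"] eps_sq_summable by simp
  then have partial_sums: "0 \<le> (\<Sum>k<n. (\<epsilon> (Suc k))\<^sup>2)" "(\<Sum>k<n. (\<epsilon> (Suc k))\<^sup>2) \<le> \<Sigma>" for n
    unfolding \<Sigma>_def by (auto intro!: sum_nonneg sum_le_suminf)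
  have B_nonneg: "0 \<le> B"
    unfolding B_def using partial_sums[of 0] offset_nonneg lyapunov_nonneg[of "(\<theta>1, v0)"] by simp
  have "u n \<le> B" for n
  proof -
    have "u n \<le> ennreal (exp (rate * (\<Sum>k<n. (\<epsilon> (Suc k))\<^sup>2)))
        * (u 0 + ennreal (offset * (\<Sum>k<n. (\<epsilon> (Suc k))\<^sup>2)))"
      using rate_nonneg offset_nonneg unfolding u_def
      by (intro ennreal_recurrence_le_exp expected_lyapunov_Suc) auto
    also have "\<dots> = ennreal (exp (rate * (\<Sum>k<n. (\<epsilon> (Suc k))\<^sup>2))
        * (lyapunov (\<theta>1, v0) + offset * (\<Sum>k<n. (\<epsilon> (Suc k))\<^sup>2)))"
      using partial_sums[of n] offset_nonneg lyapunov_nonneg[of "(\<theta>1, v0)"]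
      by (simp add: u_def emeasure_space_1 ennreal_mult ennreal_plus)
    also have "\<dots> \<le> ennreal B"
      unfolding B_def using partial_sums[of n] rate_nonneg offset_nonneg lyapunov_nonneg[of "(\<theta>1, v0)"]
      by (intro ennreal_leI mult_mono add_left_mono mult_left_mono) (auto intro: mult_left_mono)
    finally show ?thesis .
  qed
  show ?thesis
  proof (intro exI allI impI)
    fix n :: nat
    have "ennreal (g (fst x)) \<le> ennreal g_coeff * ennreal (lyapunov x)" for x
      using g_le_lyapunov[of "fst x" "snd x"] g_coeff_nonneg lyapunov_nonneg[of x]
      by (simp add: ennreal_leI flip: ennreal_mult)
    then have "(\<integral>\<^sup>+\<omega>. ennreal (g (hb_theta DG \<alpha> \<epsilon> \<xi> \<theta>1 v0 n \<omega>)) \<partial>P)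
        \<le> (\<integral>\<^sup>+\<omega>. ennreal g_coeff * lyapunov (hb_state TYPE('n) DG \<alpha> \<epsilon> \<xi> \<theta>1 v0 (n - 1) \<omega>) \<partial>P)"
      unfolding hb_theta_def by (intro nn_integral_mono)
    also have "\<dots> \<le> ennreal g_coeff * ennreal B"
      using \<open>u (n - 1) \<le> B\<close> by (simp add: u_def nn_integral_cmult mult_left_mono)
    also have "\<dots> < ennreal (g_coeff * B + 1)"
      using g_coeff_nonneg B_nonneg by (simp add: ennreal_less_iff flip: ennreal_mult)
    finally show "(\<integral>\<^sup>+\<omega>. ennreal (g (hb_theta DG \<alpha> \<epsilon> \<xi> \<theta>1 v0 n \<omega>)) \<partial>P) < ennreal (g_coeff * B + 1)" .
  qed
qed

end

theorem lemma1:
  fixes P :: "'a measure" and S :: "'b measure"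
    and \<xi> :: "nat \<Rightarrow> 'a \<Rightarrow> 'b"
    and g :: "real^'n::finite \<Rightarrow> real" and Dg :: "real^'n \<Rightarrow> real^'n"
    and G :: "real^'n \<Rightarrow> 'b \<Rightarrow> real" and DG :: "real^'n \<Rightarrow> 'b \<Rightarrow> real^'n"
    and \<alpha> :: real and \<epsilon> :: "nat \<Rightarrow> real" and c K :: real
  assumes prob: "prob_space P"
    and xi_rv: "\<And>n. n \<ge> 1 \<Longrightarrow> \<xi> n \<in> measurable P S"
    and xi_indep: "prob_space.indep_vars P (\<lambda>_. S) \<xi> {1..}"
    and G_meas: "\<And>x. (\<lambda>s. G x s) \<in> borel_measurable S"
    and DG_meas: "(\<lambda>(x, s). DG x s) \<in> borel_measurable (borel \<Otimes>\<^sub>M S)"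
    and G_diff: "\<And>x s. s \<in> space S \<Longrightarrow> GDERIV (\<lambda>y. G y s) x :> DG x s"
    and G_integrable: "\<And>x n. n \<ge> 1 \<Longrightarrow> integrable P (\<lambda>\<omega>. G x (\<xi> n \<omega>))"
    and unbiased: "\<And>x n. n \<ge> 1 \<Longrightarrow> g x = (\<integral>\<omega>. G x (\<xi> n \<omega>) \<partial>P)"
    and g_nonneg: "\<And>x. g x \<ge> 0"
    and g_grad: "\<And>x. GDERIV g x :> Dg x"
    and Dg_cont: "continuous_on UNIV Dg"
    and J_nonempty: "{\<theta>. Dg \<theta> = 0} \<noteq> {}"
    and c_pos: "c > 0"
    and Lipschitz: "\<And>x y. norm (Dg x - Dg y) \<le> c * norm (x - y)"
    and K_pos: "K > 0"
    and variance: "\<And>\<theta> n. n \<ge> 1 \<Longrightarrow>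
        (\<integral>\<^sup>+ \<omega>. ennreal ((norm (Dg \<theta> - DG \<theta> (\<xi> n \<omega>)))\<^sup>2) \<partial>P) \<le> ennreal (K * (1 + g \<theta>))"
    and alpha: "0 \<le> \<alpha>" "\<alpha> < 1"
    and eps_pos: "\<And>n. n \<ge> 1 \<Longrightarrow> \<epsilon> n > 0"
    and eps_mono: "\<And>m n. 1 \<le> m \<Longrightarrow> m \<le> n \<Longrightarrow> \<epsilon> n \<le> \<epsilon> m"
    and eps_lim: "\<epsilon> \<longlonglongrightarrow> 0"
    and eps_div: "\<not> summable \<epsilon>"
    and eps_sq: "summable (\<lambda>n. (\<epsilon> n)\<^sup>2)"
  shows "\<forall>\<theta>1 v0. \<exists>T::real. \<forall>n\<ge>1.
           (\<integral>\<^sup>+ \<omega>. ennreal (g (hb_theta DG \<alpha> \<epsilon> \<xi> \<theta>1 v0 n \<omega>)) \<partial>P) < ennreal T"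
proof -
  \<comment> \<open>Boundedness only needs \<open>\<Sum> \<epsilon>\<^sup>2 < \<infinity>\<close>; the remaining step-size hypotheses and
    \<open>J \<noteq> {}\<close> serve the convergence of the iteration, not this bound, while \<open>xi_rv\<close> and
    \<open>Dg_cont\<close> follow from \<open>xi_indep\<close> and \<open>Lipschitz\<close>.\<close>
  interpret heavy_ball_sgd g Dg c \<alpha> K P S \<xi> G DG \<epsilon>
    using prob xi_indep DG_meas G_meas G_diff G_integrable unbiased variance
      g_nonneg g_grad Lipschitz c_pos alpha K_pos eps_pos eps_sq
    by (intro heavy_ball_sgd.intro heavy_ball_lyapunov.intro nonneg_lipschitz_gradient.intro
        heavy_ball_lyapunov_axioms.intro heavy_ball_sgd_axioms.intro) (auto intro: less_imp_le)
  show ?thesis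
    using expected_g_bounded by blast
qed

end
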